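(* Let $\lambda_1,\lambda_2,\sigma_1,\sigma_2\in\mathbb{C}^*$ and $\eta_1,\eta_2\in\mathbb{C}$. Then $\Omega(\lambda_1,\eta_1,0,\sigma_1)\otimes\Omega(\lambda_2,\eta_2,0,\sigma_2)$ is an irreducible $\mathcal{G}$-module if and only if $\lambda_1\neq\lambda_2$.
   Context: The planar Galilean conformal algebra $\mathcal{G}$ is the complex Lie algebra with basis $\{L_m,H_m,I_m,J_m\mid m\in\mathbb{Z}\}$ and brackets $[L_m,L_n]=(n-m)L_{m+n}$, $[L_m,H_n]=nH_{m+n}$, $[L_m,I_n]=(n-m)I_{m+n}$, $[L_m,J_n]=(n-m)J_{m+n}$, $[H_m,I_n]=I_{m+n}$, $[H_m,J_n]=-J_{m+n}$, and $[H_m,H_n]=[I_m,I_n]=[J_m,J_n]=[I_m,J_n]=0$ for all $m,n\in\mathbb{Z}$. For $\lambda,\sigma\in\mathbb{C}^*$, $\eta\in\mathbb{C}$, the module $\Omega(\lambda,\eta,0,\sigma)$ is $\mathbb{C}[S,T]$ with $L_m f(S,T)=\lambda^m(T+mS+m\eta)f(S,T-m)$, $H_m f(S,T)=\lambda^m S f(S,T-m)$, $I_m f(S,T)=0$, $J_m f(S,T)=\lambda^m\sigma f(S+1,T-m)$. The tensor product of $\mathcal{G}$-modules has action $x(v\otimes w)=xv\otimes w+v\otimes xw$. *)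

theory Defs
  imports Complex_Main
begin

text \<open>Basis elements of the planar Galilean conformal algebra.\<close>
datatype gca = L int | H int | I int | J int

type_synonym fn2 = "complex \<Rightarrow> complex \<Rightarrow> complex"
type_synonym fn4 = "complex \<Rightarrow> complex \<Rightarrow> complex \<Rightarrow> complex \<Rightarrow> complex"

text \<open>Polynomials in two / four variables over the complex numbers, represented
  (faithfully, since the field is infinite) as polynomial functions.\<close>
definition poly4 :: "fn4 set" where
  "poly4 = {f. \<exists>(F :: (nat \<times> nat \<times> nat \<times> nat) set) (c :: nat \<times> nat \<times> nat \<times> nat \<Rightarrow> complex).
     finite F \<and>
     (\<forall>s1 t1 s2 t2. f s1 t1 s2 t2 =
        (\<Sum>(a,b,a',b')\<in>F. c (a,b,a',b') * s1 ^ a * t1 ^ b * s2 ^ a' * t2 ^ b'))}"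

text \<open>The action of basis elements on Omega(lambda, eta, 0, sigma) = C[S,T].\<close>
fun omega_act :: "complex \<Rightarrow> complex \<Rightarrow> complex \<Rightarrow> gca \<Rightarrow> fn2 \<Rightarrow> fn2" where
  "omega_act lam eta sig (L m) f =
     (\<lambda>S T. lam powi m * (T + of_int m * S + of_int m * eta) * f S (T - of_int m))"
| "omega_act lam eta sig (H m) f = (\<lambda>S T. lam powi m * S * f S (T - of_int m))"
| "omega_act lam eta sig (I m) f = (\<lambda>S T. 0)"
| "omega_act lam eta sig (J m) f = (\<lambda>S T. lam powi m * sig * f (S + 1) (T - of_int m))"

text \<open>Tensor product action on C[S1,T1] \<otimes> C[S2,T2] = C[S1,T1,S2,T2]:
  x(f \<otimes> g) = xf \<otimes> g + f \<otimes> xg, extended linearly.\<close>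
definition tensor_act :: "(gca \<Rightarrow> fn2 \<Rightarrow> fn2) \<Rightarrow> (gca \<Rightarrow> fn2 \<Rightarrow> fn2) \<Rightarrow> gca \<Rightarrow> fn4 \<Rightarrow> fn4" where
  "tensor_act \<rho>1 \<rho>2 x F =
     (\<lambda>s1 t1 s2 t2. \<rho>1 x (\<lambda>s t. F s t s2 t2) s1 t1 + \<rho>2 x (\<lambda>s t. F s1 t1 s t) s2 t2)"

definition zero4 :: fn4 where "zero4 = (\<lambda>s1 t1 s2 t2. 0)"

definition add4 :: "fn4 \<Rightarrow> fn4 \<Rightarrow> fn4" where
  "add4 f g = (\<lambda>s1 t1 s2 t2. f s1 t1 s2 t2 + g s1 t1 s2 t2)"

definition smul4 :: "complex \<Rightarrow> fn4 \<Rightarrow> fn4" where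
  "smul4 c f = (\<lambda>s1 t1 s2 t2. c * f s1 t1 s2 t2)"

definition irreducible_module4 :: "fn4 set \<Rightarrow> (gca \<Rightarrow> fn4 \<Rightarrow> fn4) \<Rightarrow> bool" where
  "irreducible_module4 V act \<longleftrightarrow>
     (\<exists>v\<in>V. v \<noteq> zero4) \<and>
     (\<forall>W. W \<subseteq> V \<and> zero4 \<in> W \<and> (\<forall>u\<in>W. \<forall>w\<in>W. add4 u w \<in> W) \<and>
          (\<forall>c. \<forall>u\<in>W. smul4 c u \<in> W) \<and> (\<forall>x. \<forall>u\<in>W. act x u \<in> W)
        \<longrightarrow> W = {zero4} \<or> W = V)"

end

theory Submission
  imports Defs "HOL-Computational_Algebra.Polynomial_Factorial"
    "HOL-Computational_Algebra.Field_as_Ring" "HOL-Library.Product_Plus"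
begin

text \<open>For \<open>\<lambda>\<^sub>1 = \<lambda>\<^sub>2\<close> the polynomials depending on \<open>t\<^sub>1, t\<^sub>2\<close> only through \<open>t\<^sub>1 + t\<^sub>2\<close> form a
  proper nonzero submodule. For \<open>\<lambda>\<^sub>1 \<noteq> \<lambda>\<^sub>2\<close> let \<open>W\<close> be a nonzero submodule. At a fixed point,
  \<open>X\<^sub>m F\<close> (\<open>X = L, H, J\<close>) is \<open>\<lambda>\<^sub>1\<^sup>m p(m) + \<lambda>\<^sub>2\<^sup>m q(m)\<close> with polynomials \<open>p, q\<close> of bounded degree,
  and a fixed polynomial in the shift \<open>m \<mapsto> m + 1\<close> separates the two summands. Hence \<open>W\<close> is
  stable under the action on each tensor factor separately, i.e. under multiplication by
  \<open>s\<^sub>1, t\<^sub>1, s\<^sub>2, t\<^sub>2\<close> and the translations \<open>(s\<^sub>i, t\<^sub>i) \<mapsto> (s\<^sub>i + 1, t\<^sub>i - m)\<close>. The associated difference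
  operators commute and are locally nilpotent, so \<open>W\<close> contains a nonzero polynomial invariant
  under all unit translations, which is a nonzero constant; multiplying it by polynomials
  gives all of \<open>\<complex>[s\<^sub>1, t\<^sub>1, s\<^sub>2, t\<^sub>2]\<close>.\<close>

section \<open>Exponential-polynomial sequences\<close>

text \<open>\<open>poly_shift P g\<close> is \<open>P(E) g\<close> for the shift \<open>(E g)(m) = g(m + 1)\<close>.\<close>
definition poly_shift :: "complex poly \<Rightarrow> (int \<Rightarrow> complex) \<Rightarrow> int \<Rightarrow> complex" where
  "poly_shift P g m = (\<Sum>i\<le>degree P. coeff P i * g (m + int i))"

lemma poly_shift_def_bound:
  assumes "degree P < K"
  shows "poly_shift P g m = (\<Sum>i<K. coeff P i * g (m + int i))"
  unfolding poly_shift_def using assms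
  by (intro sum.mono_neutral_left) (auto simp: not_le coeff_eq_0)

lemma poly_shift_0 [simp]: "poly_shift 0 g m = 0"
  by (simp add: poly_shift_def)

lemma poly_shift_1 [simp]: "poly_shift 1 g m = g m"
  by (simp add: poly_shift_def)

lemma poly_shift_zero_seq [simp]: "poly_shift P (\<lambda>m. 0) m = 0"
  by (simp add: poly_shift_def)

lemma poly_shift_add: "poly_shift (P + Q) g m = poly_shift P g m + poly_shift Q g m"
proof -
  define K where "K = Suc (max (degree P) (degree Q))"
  have "degree (P + Q) < K" "degree P < K" "degree Q < K"
    using degree_add_le_max[of P Q] unfolding K_def by linarith+
  then show ?thesis by (simp add: poly_shift_def_bound sum.distrib distrib_right)
qed

lemma poly_shift_smult: "poly_shift (smult a P) g m = a * poly_shift P g m"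
  by (cases "a = 0") (simp_all add: poly_shift_def sum_distrib_left mult.assoc)

lemma poly_shift_pCons: "poly_shift (pCons a P) g m = a * g m + poly_shift P g (m + 1)"
proof -
  define K where "K = Suc (degree P)"
  have "degree (pCons a P) < Suc K" "degree P < K"
    unfolding K_def using degree_pCons_le[of a P] by linarith+
  then show ?thesis
    by (simp add: poly_shift_def_bound sum.lessThan_Suc_shift del: sum.lessThan_Suc)
       (simp add: add_ac)
qed

lemma poly_shift_seq_add:
  "poly_shift P (\<lambda>m. g m + h m) m = poly_shift P g m + poly_shift P h m"
  by (simp add: poly_shift_def sum.distrib distrib_left)

lemma poly_shift_mult: "poly_shift (P * Q) g m = poly_shift P (poly_shift Q g) m"
proof (induction P arbitrary: m)
  case (pCons a P)
  have "poly_shift (pCons a P * Q) g m = a * poly_shift Q g m + poly_shift (P * Q) g (m + 1)"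
    by (simp add: poly_shift_add poly_shift_smult poly_shift_pCons)
  then show ?case by (simp add: pCons.IH poly_shift_pCons)
qed simp

lemma poly_shift_linear_factor: "poly_shift [:-c, 1:] g m = g (m + 1) - c * g m"
  by (simp add: poly_shift_pCons)

lemma degree_forward_difference:
  fixes r :: "'a::idom poly"
  assumes "pcompose r [:1, 1:] - r \<noteq> 0"
  shows "degree (pcompose r [:1, 1:] - r) < degree r"
proof -
  let ?q = "pcompose r [:1, 1:]"
  have deg: "degree ?q = degree r"
    by (simp add: degree_pcompose)
  have "coeff (?q - r) (degree r) = lead_coeff ?q - lead_coeff r"
    by (simp add: deg)
  also have "\<dots> = 0"
    by (simp add: lead_coeff_comp)
  finally have "coeff (?q - r) (degree r) = 0" .
  moreover have "degree (?q - r) \<le> degree r"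
    using degree_diff_le[of ?q "degree r" r] deg by simp
  ultimately show ?thesis
    using assms by (metis le_neq_implies_less leading_coeff_0_iff)
qed

text \<open>\<open>E - \<lambda>\<close> maps \<open>\<lambda>\<^sup>m r(m)\<close> to \<open>\<lambda>\<^sup>m (\<lambda> \<Delta>r)(m)\<close>, and the difference \<open>\<Delta>\<close> lowers the degree.\<close>
lemma poly_shift_annihilates_exp_poly:
  fixes lam :: complex
  assumes "lam \<noteq> 0" and "degree r < d"
  shows "poly_shift ([:-lam, 1:] ^ d) (\<lambda>m. lam powi m * poly r (of_int m)) m = 0"
  using assms(2)
proof (induction d arbitrary: r m)
  case (Suc d)
  define r' where "r' = smult lam (pcompose r [:1, 1:] - r)"
  have step: "poly_shift [:-lam, 1:] (\<lambda>m. lam powi m * poly r (of_int m))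
      = (\<lambda>m. lam powi m * poly r' (of_int m))"
    using assms(1)
    by (simp add: fun_eq_iff poly_shift_linear_factor r'_def poly_pcompose power_int_add
        algebra_simps)
  have "poly_shift ([:-lam, 1:] ^ d) (\<lambda>m. lam powi m * poly r' (of_int m)) m = 0"
  proof (cases "r' = 0")
    case False
    then have "degree r' < d"
      using degree_forward_difference[of r] Suc.prems by (auto simp: r'_def)
    then show ?thesis by (rule Suc.IH)
  qed simp
  then show ?case
    by (simp only: power_Suc2 poly_shift_mult step)
qed simp

lemma coprime_linear_factor_powers:
  fixes a b :: complex
  assumes "a \<noteq> b"
  obtains A B where "A * [:-a, 1:] ^ n + B * [:-b, 1:] ^ n = 1"
proof -
  have "coprime [:-a, 1:] [:-b, 1:]"
  proof (rule coprimeI)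
    fix c
    assume "c dvd [:-a, 1:]" "c dvd [:-b, 1:]"
    then have "c dvd [:b - a:]"
      using dvd_diff[of c "[:-a, 1:]" "[:-b, 1:]"] by simp
    moreover have "is_unit [:b - a:]"
      using assms by (simp add: is_unit_const_poly_iff dvd_field_iff)
    ultimately show "is_unit c"
      by (rule dvd_unit_imp_unit)
  qed
  then have "gcd ([:-a, 1:] ^ n) ([:-b, 1:] ^ n) = 1"
    by (simp add: coprime_imp_gcd_eq_1)
  then show ?thesis
    using that bezout_coefficients_fst_snd[of "[:-a, 1:] ^ n" "[:-b, 1:] ^ n"] by metis
qed

text \<open>\<open>\<Psi>\<close> is divisible by \<open>(E - b)\<^sup>d\<^sup>+\<^sup>1\<close> and congruent to \<open>1\<close> modulo \<open>(E - a)\<^sup>d\<^sup>+\<^sup>1\<close>.\<close>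
lemma exp_poly_separation:
  fixes a b :: complex
  assumes "a \<noteq> 0" "b \<noteq> 0" "a \<noteq> b"
  obtains \<Psi> where "\<And>p q m. degree p \<le> d \<Longrightarrow> degree q \<le> d \<Longrightarrow>
    poly_shift \<Psi> (\<lambda>m. a powi m * poly p (of_int m) + b powi m * poly q (of_int m)) m
      = a powi m * poly p (of_int m)"
proof -
  obtain A B where AB: "A * [:-b, 1:] ^ Suc d + B * [:-a, 1:] ^ Suc d = 1"
    using coprime_linear_factor_powers assms(3) by metis
  show ?thesis
  proof (rule that[of "A * [:-b, 1:] ^ Suc d"])
    fix p q :: "complex poly" and m :: int
    assume "degree p \<le> d" "degree q \<le> d"
    then have kill_a:
        "poly_shift ([:-a, 1:] ^ Suc d) (\<lambda>m. a powi m * poly p (of_int m)) = (\<lambda>m. 0)"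
      and kill_b:
        "poly_shift ([:-b, 1:] ^ Suc d) (\<lambda>m. b powi m * poly q (of_int m)) = (\<lambda>m. 0)"
      using poly_shift_annihilates_exp_poly[OF assms(1), of p "Suc d"]
        poly_shift_annihilates_exp_poly[OF assms(2), of q "Suc d"] by auto
    have "poly_shift (A * [:-b, 1:] ^ Suc d) (\<lambda>m. a powi m * poly p (of_int m)) m
        = poly_shift 1 (\<lambda>m. a powi m * poly p (of_int m)) m"
      unfolding AB[symmetric] poly_shift_add poly_shift_mult kill_a by simp
    then show "poly_shift (A * [:-b, 1:] ^ Suc d)
        (\<lambda>m. a powi m * poly p (of_int m) + b powi m * poly q (of_int m)) m
      = a powi m * poly p (of_int m)"
      unfolding poly_shift_seq_add poly_shift_mult kill_b by simp
  qed
qed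

section \<open>Polynomial functions in four variables\<close>

definition monomial4 :: "nat \<times> nat \<times> nat \<times> nat \<Rightarrow> fn4" where
  "monomial4 = (\<lambda>(a, b, a', b') s1 t1 s2 t2. s1 ^ a * t1 ^ b * s2 ^ a' * t2 ^ b')"

lemma monomial4_add:
  "monomial4 (k + l) s1 t1 s2 t2 = monomial4 k s1 t1 s2 t2 * monomial4 l s1 t1 s2 t2"
  by (cases k; cases l) (simp add: monomial4_def power_add algebra_simps)

lemma poly4_iff:
  "f \<in> poly4 \<longleftrightarrow>
     (\<exists>F c. finite F \<and> f = (\<lambda>s1 t1 s2 t2. \<Sum>k\<in>F. c k * monomial4 k s1 t1 s2 t2))"
proof -
  have "(\<Sum>(a, b, a', b')\<in>F. c (a, b, a', b') * s1 ^ a * t1 ^ b * s2 ^ a' * t2 ^ b')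
      = (\<Sum>k\<in>F. c k * monomial4 k s1 t1 s2 t2)" for c F s1 t1 s2 t2
    by (rule sum.cong) (auto simp: monomial4_def mult.assoc)
  then show ?thesis
    unfolding poly4_def by (simp add: fun_eq_iff)
qed

lemma poly4_sum_monomials:
  assumes "finite A"
  shows "(\<lambda>s1 t1 s2 t2. \<Sum>x\<in>A. c x * monomial4 (e x) s1 t1 s2 t2) \<in> poly4"
proof -
  define c' where "c' k = (\<Sum>x\<in>{x\<in>A. e x = k}. c x)" for k
  have "(\<lambda>s1 t1 s2 t2. \<Sum>x\<in>A. c x * monomial4 (e x) s1 t1 s2 t2)
      = (\<lambda>s1 t1 s2 t2. \<Sum>k\<in>e ` A. c' k * monomial4 k s1 t1 s2 t2)"
  proof (intro ext)
    fix s1 t1 s2 t2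
    have "(\<Sum>x\<in>A. c x * monomial4 (e x) s1 t1 s2 t2)
        = (\<Sum>k\<in>e ` A. \<Sum>x\<in>{x\<in>A. e x = k}. c x * monomial4 (e x) s1 t1 s2 t2)"
      by (rule sum.image_gen[OF assms])
    also have "\<dots> = (\<Sum>k\<in>e ` A. c' k * monomial4 k s1 t1 s2 t2)"
      unfolding c'_def sum_distrib_right by (intro sum.cong refl) auto
    finally show "(\<Sum>x\<in>A. c x * monomial4 (e x) s1 t1 s2 t2)
        = (\<Sum>k\<in>e ` A. c' k * monomial4 k s1 t1 s2 t2)" .
  qed
  moreover have "finite (e ` A)"
    using assms by simp
  ultimately show ?thesis
    unfolding poly4_iff by blast
qed

lemma poly4_add:
  assumes "f \<in> poly4" "g \<in> poly4"
  shows "(\<lambda>s1 t1 s2 t2. f s1 t1 s2 t2 + g s1 t1 s2 t2) \<in> poly4"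
proof -
  obtain F c G d where "finite F" "f = (\<lambda>s1 t1 s2 t2. \<Sum>k\<in>F. c k * monomial4 k s1 t1 s2 t2)"
    and "finite G" "g = (\<lambda>s1 t1 s2 t2. \<Sum>k\<in>G. d k * monomial4 k s1 t1 s2 t2)"
    using assms unfolding poly4_iff by blast
  then show ?thesis
    using poly4_sum_monomials[of "F <+> G" "case_sum c d" "case_sum id id"]
    by (simp add: sum.Plus)
qed

lemma poly4_mult:
  assumes "f \<in> poly4" "g \<in> poly4"
  shows "(\<lambda>s1 t1 s2 t2. f s1 t1 s2 t2 * g s1 t1 s2 t2) \<in> poly4"
proof -
  obtain F c G d where "finite F" "f = (\<lambda>s1 t1 s2 t2. \<Sum>k\<in>F. c k * monomial4 k s1 t1 s2 t2)"
    and "finite G" "g = (\<lambda>s1 t1 s2 t2. \<Sum>k\<in>G. d k * monomial4 k s1 t1 s2 t2)"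
    using assms unfolding poly4_iff by blast
  then show ?thesis
    using poly4_sum_monomials[of "F \<times> G" "\<lambda>(k, l). c k * d l" "\<lambda>(k, l). k + l"]
    by (simp add: sum_product sum.cartesian_product monomial4_add case_prod_beta mult_ac)
qed

lemma poly4_monomial: "(\<lambda>s1 t1 s2 t2. c * monomial4 k s1 t1 s2 t2) \<in> poly4"
  using poly4_sum_monomials[of "{()}" "\<lambda>_. c" "\<lambda>_. k"] by simp

lemma poly4_const: "(\<lambda>s1 t1 s2 t2. c) \<in> poly4"
  and poly4_s1: "(\<lambda>s1 t1 s2 t2. s1) \<in> poly4"
  and poly4_t1: "(\<lambda>s1 t1 s2 t2. t1) \<in> poly4"
  and poly4_s2: "(\<lambda>s1 t1 s2 t2. s2) \<in> poly4"
  and poly4_t2: "(\<lambda>s1 t1 s2 t2. t2) \<in> poly4"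
  using poly4_monomial[of c 0] poly4_monomial[of 1 "(1, 0, 0, 0)"] poly4_monomial[of 1 "(0, 1, 0, 0)"]
    poly4_monomial[of 1 "(0, 0, 1, 0)"] poly4_monomial[of 1 "(0, 0, 0, 1)"]
  by (simp_all add: monomial4_def zero_prod_def)

lemma poly4_induct [consumes 1, case_names const s1 t1 s2 t2 add mult]:
  assumes "f \<in> poly4"
    and const: "\<And>c. P (\<lambda>s1 t1 s2 t2. c)"
    and s1: "P (\<lambda>s1 t1 s2 t2. s1)" and t1: "P (\<lambda>s1 t1 s2 t2. t1)"
    and s2: "P (\<lambda>s1 t1 s2 t2. s2)" and t2: "P (\<lambda>s1 t1 s2 t2. t2)"
    and add: "\<And>f g. P f \<Longrightarrow> P g \<Longrightarrow> P (\<lambda>s1 t1 s2 t2. f s1 t1 s2 t2 + g s1 t1 s2 t2)"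
    and mult: "\<And>f g. P f \<Longrightarrow> P g \<Longrightarrow> P (\<lambda>s1 t1 s2 t2. f s1 t1 s2 t2 * g s1 t1 s2 t2)"
  shows "P f"
proof -
  have power: "P (\<lambda>s1 t1 s2 t2. g s1 t1 s2 t2 ^ n)" if "P g" for g n
    by (induction n) (use const mult[OF that] in simp_all)
  have monomial: "P (\<lambda>s1 t1 s2 t2. c * monomial4 k s1 t1 s2 t2)" for c k
    by (cases k) (simp add: monomial4_def mult.assoc, intro mult const power s1 t1 s2 t2)
  have "P (\<lambda>s1 t1 s2 t2. \<Sum>k\<in>F. c k * monomial4 k s1 t1 s2 t2)" if "finite F" for F c
    using that by (induction F) (use const in simp, simp add: add monomial)
  then show ?thesis
    using assms(1) unfolding poly4_iff by blast
qed

definition lines_degree_le :: "nat \<Rightarrow> fn4 \<Rightarrow> bool" where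
  "lines_degree_le N f \<longleftrightarrow> (\<forall>s1 t1 s2 t2 e1 e2 e3 e4. \<exists>r. degree r \<le> N \<and>
     (\<forall>x. f (s1 + x * e1) (t1 + x * e2) (s2 + x * e3) (t2 + x * e4) = poly r x))"

lemma lines_degree_le_add:
  assumes "lines_degree_le N f" "lines_degree_le M g"
  shows "lines_degree_le (max N M) (\<lambda>s1 t1 s2 t2. f s1 t1 s2 t2 + g s1 t1 s2 t2)"
  unfolding lines_degree_le_def
proof (intro allI)
  fix s1 t1 s2 t2 e1 e2 e3 e4 :: complex
  obtain r q where "degree r \<le> N" "degree q \<le> M"
    "\<forall>x. f (s1 + x * e1) (t1 + x * e2) (s2 + x * e3) (t2 + x * e4) = poly r x"
    "\<forall>x. g (s1 + x * e1) (t1 + x * e2) (s2 + x * e3) (t2 + x * e4) = poly q x"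
    using assms unfolding lines_degree_le_def by metis
  then show "\<exists>p. degree p \<le> max N M \<and> (\<forall>x. f (s1 + x * e1) (t1 + x * e2) (s2 + x * e3) (t2 + x * e4)
      + g (s1 + x * e1) (t1 + x * e2) (s2 + x * e3) (t2 + x * e4) = poly p x)"
    by (intro exI[of _ "r + q"]) (auto intro!: degree_add_le)
qed

lemma lines_degree_le_mult:
  assumes "lines_degree_le N f" "lines_degree_le M g"
  shows "lines_degree_le (N + M) (\<lambda>s1 t1 s2 t2. f s1 t1 s2 t2 * g s1 t1 s2 t2)"
  unfolding lines_degree_le_def
proof (intro allI)
  fix s1 t1 s2 t2 e1 e2 e3 e4 :: complex
  obtain r q where "degree r \<le> N" "degree q \<le> M"
    "\<forall>x. f (s1 + x * e1) (t1 + x * e2) (s2 + x * e3) (t2 + x * e4) = poly r x"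
    "\<forall>x. g (s1 + x * e1) (t1 + x * e2) (s2 + x * e3) (t2 + x * e4) = poly q x"
    using assms unfolding lines_degree_le_def by metis
  then show "\<exists>p. degree p \<le> N + M \<and> (\<forall>x. f (s1 + x * e1) (t1 + x * e2) (s2 + x * e3) (t2 + x * e4)
      * g (s1 + x * e1) (t1 + x * e2) (s2 + x * e3) (t2 + x * e4) = poly p x)"
    by (intro exI[of _ "r * q"]) (auto intro: order_trans[OF degree_mult_le add_mono])
qed

lemma poly4_lines_degree_bounded:
  assumes "f \<in> poly4"
  obtains N where "lines_degree_le N f"
proof -
  have "\<exists>N. lines_degree_le N f"
    using assms
  proof (induction rule: poly4_induct)
    case (const c)
    show ?case
      by (rule exI[of _ 0]) (auto simp: lines_degree_le_def intro: exI[of _ "[:c:]"])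
  next
    case s1
    show ?case
      by (rule exI[of _ 1]) (auto simp: lines_degree_le_def intro!: exI[of _ "[:s1, e1:]" for s1 e1])
  next
    case t1
    show ?case
      by (rule exI[of _ 1]) (auto simp: lines_degree_le_def intro!: exI[of _ "[:t1, e2:]" for t1 e2])
  next
    case s2
    show ?case
      by (rule exI[of _ 1]) (auto simp: lines_degree_le_def intro!: exI[of _ "[:s2, e3:]" for s2 e3])
  next
    case t2
    show ?case
      by (rule exI[of _ 1]) (auto simp: lines_degree_le_def intro!: exI[of _ "[:t2, e4:]" for t2 e4])
  next
    case (add f g)
    then show ?case
      using lines_degree_le_add by blast
  next
    case (mult f g)
    then show ?case
      using lines_degree_le_mult by blast
  qed
  then show ?thesis
    using that by blast
qed

lemma poly4_translate:
  assumes "f \<in> poly4"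
  shows "(\<lambda>s1 t1 s2 t2. f (s1 + a) (t1 + b) (s2 + c) (t2 + d)) \<in> poly4"
  using assms
  by (induction rule: poly4_induct)
     (auto intro: poly4_add poly4_mult poly4_const poly4_s1 poly4_t1 poly4_s2 poly4_t2)

lemma periodic_polynomial_const:
  fixes h :: "complex \<Rightarrow> complex"
  assumes poly: "\<exists>r. \<forall>x. h x = poly r x" and periodic: "\<And>x. h (x + 1) = h x"
  shows "h y = h 0"
proof -
  obtain r where r: "\<And>x. h x = poly r x"
    using poly by blast
  have "h (of_nat n) = h 0" for n
    by (induction n) (simp_all add: periodic add.commute[of 1])
  then have "range of_nat \<subseteq> {x. poly (r - [:h 0:]) x = 0}"
    by (auto simp: r)
  moreover have "infinite (range (of_nat :: nat \<Rightarrow> complex))"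
    using range_inj_infinite[OF inj_of_nat] .
  ultimately have "r - [:h 0:] = 0"
    using poly_roots_finite finite_subset by blast
  then have "poly (r - [:h 0:]) y = 0"
    by simp
  then show ?thesis
    by (simp add: r)
qed

lemma poly4_periodic_const:
  assumes "G \<in> poly4"
    and "\<And>s1 t1 s2 t2. G (s1 + 1) t1 s2 t2 = G s1 t1 s2 t2"
    and "\<And>s1 t1 s2 t2. G s1 (t1 + 1) s2 t2 = G s1 t1 s2 t2"
    and "\<And>s1 t1 s2 t2. G s1 t1 (s2 + 1) t2 = G s1 t1 s2 t2"
    and "\<And>s1 t1 s2 t2. G s1 t1 s2 (t2 + 1) = G s1 t1 s2 t2"
  shows "G s1 t1 s2 t2 = G 0 0 0 0"
proof -
  obtain N where "lines_degree_le N G"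
    using poly4_lines_degree_bounded assms(1) .
  then have line: "\<exists>r. \<forall>x. G (s1 + x * e1) (t1 + x * e2) (s2 + x * e3) (t2 + x * e4) = poly r x"
    for s1 t1 s2 t2 e1 e2 e3 e4
    unfolding lines_degree_le_def by blast
  have "G s1 t1 s2 t2 = G 0 t1 s2 t2"
    by (rule periodic_polynomial_const[where h = "\<lambda>x. G x t1 s2 t2"])
       (use line[of 0 1 t1 0 s2 0 t2 0] assms(2) in simp_all)
  also have "\<dots> = G 0 0 s2 t2"
    by (rule periodic_polynomial_const[where h = "\<lambda>x. G 0 x s2 t2"])
       (use line[of 0 0 0 1 s2 0 t2 0] assms(3) in simp_all)
  also have "\<dots> = G 0 0 0 t2"
    by (rule periodic_polynomial_const[where h = "\<lambda>x. G 0 0 x t2"])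
       (use line[of 0 0 0 0 0 1 t2 0] assms(4) in simp_all)
  also have "\<dots> = G 0 0 0 0"
    by (rule periodic_polynomial_const[where h = "\<lambda>x. G 0 0 0 x"])
       (use line[of 0 0 0 0 0 0 0 1] assms(5) in simp_all)
  finally show ?thesis .
qed

lemma tensor_act_poly4:
  assumes "F \<in> poly4"
  shows "tensor_act (omega_act l1 e1 g1) (omega_act l2 e2 g2) x F \<in> poly4"
proof -
  have "(\<lambda>s1 t1 s2 t2. F (s1 + a) (t1 - b) s2 t2) \<in> poly4"
    "(\<lambda>s1 t1 s2 t2. F s1 t1 (s2 + a) (t2 - b)) \<in> poly4" for a b
    using poly4_translate[OF assms, of a "-b" 0 0] poly4_translate[OF assms, of 0 0 a "-b"] by simp_all
  from this[of 0] this[of 1] show ?thesis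
    by (cases x)
       (auto simp: tensor_act_def intro!: poly4_add poly4_mult poly4_const poly4_s1 poly4_t1
          poly4_s2 poly4_t2)
qed

section \<open>Reducibility for equal \<open>\<lambda>\<close>\<close>

text \<open>For \<open>L\<^sub>m\<close> the coefficient \<open>T\<close> moves by \<open>y\<close> in one factor and by \<open>-y\<close> in the other;
  the two changes cancel because both factors carry the same \<open>\<lambda>\<^sup>m\<close>.\<close>
lemma tensor_act_diagonal_invariant:
  assumes inv: "\<And>s1 t1 s2 t2 y. F s1 (t1 + y) s2 t2 = F s1 t1 s2 (t2 + y)"
  shows "tensor_act (omega_act lam eta1 sig1) (omega_act lam eta2 sig2) x F s1 (t1 + y) s2 t2
       = tensor_act (omega_act lam eta1 sig1) (omega_act lam eta2 sig2) x F s1 t1 s2 (t2 + y)"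
proof (cases x)
  case (L m)
  have "F s1 (t1 + y - of_int m) s2 t2 = F s1 t1 s2 (t2 + y - of_int m)"
    "F s1 (t1 + y) s2 (t2 - of_int m) = F s1 t1 s2 (t2 + y - of_int m)"
    "F s1 (t1 - of_int m) s2 (t2 + y) = F s1 t1 s2 (t2 + y - of_int m)"
    using inv[of s1 "t1 - of_int m" y s2 t2] inv[of s1 t1 y s2 "t2 - of_int m"]
      inv[of s1 t1 "- of_int m" s2 "t2 + y"]
    by (simp_all add: algebra_simps)
  then show ?thesis
    by (simp add: L tensor_act_def algebra_simps)
next
  case (H m)
  have "F s1 (t1 + y - of_int m) s2 t2 = F s1 (t1 - of_int m) s2 (t2 + y)"
    "F s1 (t1 + y) s2 (t2 - of_int m) = F s1 t1 s2 (t2 + y - of_int m)"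
    using inv[of s1 "t1 - of_int m" y s2 t2] inv[of s1 t1 y s2 "t2 - of_int m"]
    by (simp_all add: algebra_simps)
  then show ?thesis
    by (simp add: H tensor_act_def algebra_simps)
next
  case (J m)
  have "F (s1 + 1) (t1 + y - of_int m) s2 t2 = F (s1 + 1) (t1 - of_int m) s2 (t2 + y)"
    "F s1 (t1 + y) (s2 + 1) (t2 - of_int m) = F s1 t1 (s2 + 1) (t2 + y - of_int m)"
    using inv[of "s1 + 1" "t1 - of_int m" y s2 t2] inv[of s1 t1 y "s2 + 1" "t2 - of_int m"]
    by (simp_all add: algebra_simps)
  then show ?thesis
    by (simp add: J tensor_act_def algebra_simps)
qed (simp add: tensor_act_def)

lemma tensor_equal_lambda_reducible:
  "\<not> irreducible_module4 poly4 (tensor_act (omega_act lam eta1 sig1) (omega_act lam eta2 sig2))"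
proof
  let ?act = "tensor_act (omega_act lam eta1 sig1) (omega_act lam eta2 sig2)"
  define W where "W = {F \<in> poly4. \<forall>s1 t1 s2 t2 y. F s1 (t1 + y) s2 t2 = F s1 t1 s2 (t2 + y)}"
  assume "irreducible_module4 poly4 ?act"
  moreover have "W \<subseteq> poly4" "zero4 \<in> W" "\<forall>u\<in>W. \<forall>w\<in>W. add4 u w \<in> W"
    "\<forall>c. \<forall>u\<in>W. smul4 c u \<in> W" "\<forall>x. \<forall>u\<in>W. ?act x u \<in> W"
    unfolding W_def zero4_def add4_def smul4_def
    by (auto intro!: poly4_const poly4_add poly4_mult tensor_act_poly4 tensor_act_diagonal_invariant)
  ultimately have "W = {zero4} \<or> W = poly4"
    unfolding irreducible_module4_def by blast
  moreover have "(\<lambda>s1 t1 s2 t2. 1) \<in> W" "(\<lambda>s1 t1 s2 t2. 1) \<noteq> zero4"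
    unfolding W_def zero4_def by (auto simp: poly4_const fun_eq_iff)
  moreover have "(\<lambda>s1 t1 s2 t2. t1) \<notin> W"
    unfolding W_def by (auto intro!: exI[of _ 1])
  ultimately show False
    using poly4_t1 by blast
qed

section \<open>Commuting locally nilpotent operators\<close>

lemma funpow_commute:
  assumes "\<And>x. f (g x) = g (f x)"
  shows "f ((g ^^ n) x) = (g ^^ n) (f x)"
  by (induction n) (simp_all add: assms)

lemma funpow_closed:
  assumes "\<And>x. x \<in> W \<Longrightarrow> f x \<in> W" and "x \<in> W"
  shows "(f ^^ n) x \<in> W"
  by (induction n) (simp_all add: assms)

lemma nilpotent_last_nonzero:
  assumes "(f ^^ n) x = z" and "x \<noteq> z"
  obtains k where "(f ^^ k) x \<noteq> z" and "f ((f ^^ k) x) = z"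
proof -
  define n0 where "n0 = (LEAST n. (f ^^ n) x = z)"
  have "(f ^^ n0) x = z"
    unfolding n0_def using assms(1) by (rule LeastI)
  moreover have "n0 \<noteq> 0"
    using \<open>(f ^^ n0) x = z\<close> assms(2) by (intro notI) simp
  then obtain k where k: "n0 = Suc k"
    using not0_implies_Suc by blast
  moreover have "(f ^^ k) x \<noteq> z"
    unfolding n0_def by (rule not_less_Least) (simp add: k flip: n0_def)
  ultimately show ?thesis
    using that[of k] by simp
qed

text \<open>Apply the operators one after another, each as often as possible without reaching \<open>z\<close>.\<close>
lemma commuting_nilpotent_common_null_vector:
  assumes closed: "\<And>f. f \<in> set fs \<Longrightarrow> f ` W \<subseteq> W"
    and nilpotent: "\<And>f. f \<in> set fs \<Longrightarrow> \<forall>x \<in> W. \<exists>n. (f ^^ n) x = z"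
    and zero: "\<And>f. f \<in> set fs \<Longrightarrow> f z = z"
    and commute: "\<And>f g. f \<in> set fs \<Longrightarrow> g \<in> set fs \<Longrightarrow> f \<circ> g = g \<circ> f"
    and "x \<in> W" "x \<noteq> z"
  shows "\<exists>y \<in> W. y \<noteq> z \<and> (\<forall>f \<in> set fs. f y = z)"
  using assms
proof (induction fs)
  case Nil
  then show ?case by auto
next
  case (Cons g fs)
  have "\<exists>y \<in> W. y \<noteq> z \<and> (\<forall>f \<in> set fs. f y = z)"
    by (rule Cons.IH) (use Cons.prems in auto)
  then obtain y where y: "y \<in> W" "y \<noteq> z" "\<forall>f \<in> set fs. f y = z"
    by blast
  obtain n where "(g ^^ n) y = z"
    using Cons.prems(2) y(1) by auto
  then obtain k where k: "(g ^^ k) y \<noteq> z" "g ((g ^^ k) y) = z"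
    using nilpotent_last_nonzero y(2) by metis
  have "(g ^^ k) y \<in> W"
    using Cons.prems(1) y(1) by (intro funpow_closed) auto
  moreover have "f ((g ^^ k) y) = z" if "f \<in> set fs" for f
  proof -
    have "f ((g ^^ k) y) = (g ^^ k) (f y)"
      using Cons.prems(4) that by (intro funpow_commute) (simp add: fun_eq_iff)
    also have "\<dots> = z"
      using y(3) that Cons.prems(3) by (induction k) auto
    finally show ?thesis .
  qed
  ultimately show ?case
    using k by auto
qed

definition diff4 :: "complex \<Rightarrow> complex \<Rightarrow> complex \<Rightarrow> complex \<Rightarrow> fn4 \<Rightarrow> fn4" where
  "diff4 a b c d F = (\<lambda>s1 t1 s2 t2. F (s1 + a) (t1 + b) (s2 + c) (t2 + d) - F s1 t1 s2 t2)"

lemma diff4_commute: "diff4 a b c d \<circ> diff4 a' b' c' d' = diff4 a' b' c' d' \<circ> diff4 a b c d"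
  by (simp add: diff4_def fun_eq_iff algebra_simps)

lemma diff4_eq_zero4_iff:
  "diff4 a b c d F = zero4 \<longleftrightarrow>
     (\<forall>s1 t1 s2 t2. F (s1 + a) (t1 + b) (s2 + c) (t2 + d) = F s1 t1 s2 t2)"
  by (simp add: diff4_def zero4_def fun_eq_iff)

lemma diff4_zero4: "diff4 a b c d zero4 = zero4"
  by (simp add: diff4_def zero4_def)

lemma diff4_power:
  "(diff4 a b c d ^^ n) F s1 t1 s2 t2 = poly_shift ([:-1, 1:] ^ n)
     (\<lambda>m. F (s1 + of_int m * a) (t1 + of_int m * b) (s2 + of_int m * c) (t2 + of_int m * d)) 0"
proof (induction n arbitrary: F)
  case (Suc n)
  let ?line = "\<lambda>F m. F (s1 + of_int m * a) (t1 + of_int m * b) (s2 + of_int m * c) (t2 + of_int m * d)"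
  have "(diff4 a b c d ^^ Suc n) F s1 t1 s2 t2 = (diff4 a b c d ^^ n) (diff4 a b c d F) s1 t1 s2 t2"
    by (simp only: funpow_Suc_right o_apply)
  also have "\<dots> = poly_shift ([:-1, 1:] ^ n) (?line (diff4 a b c d F)) 0"
    by (rule Suc.IH)
  also have "?line (diff4 a b c d F) = poly_shift [:-1, 1:] (?line F)"
    by (simp add: fun_eq_iff diff4_def poly_shift_linear_factor algebra_simps)
  finally show ?case
    by (simp only: power_Suc2 poly_shift_mult)
qed simp

lemma diff4_nilpotent:
  assumes "F \<in> poly4"
  shows "\<exists>n. (diff4 a b c d ^^ n) F = zero4"
proof -
  obtain N where N: "lines_degree_le N F"
    using poly4_lines_degree_bounded assms .
  have "(diff4 a b c d ^^ Suc N) F s1 t1 s2 t2 = 0" for s1 t1 s2 t2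
  proof -
    obtain r where r: "degree r \<le> N"
      "\<forall>x. F (s1 + x * a) (t1 + x * b) (s2 + x * c) (t2 + x * d) = poly r x"
      using N unfolding lines_degree_le_def by blast
    then have "(diff4 a b c d ^^ Suc N) F s1 t1 s2 t2
        = poly_shift ([:-1, 1:] ^ Suc N) (\<lambda>m. 1 powi m * poly r (of_int m)) 0"
      unfolding diff4_power by simp
    also have "\<dots> = 0"
      using r(1) by (intro poly_shift_annihilates_exp_poly) auto
    finally show ?thesis .
  qed
  then show ?thesis
    unfolding zero4_def by blast
qed

section \<open>Irreducibility for distinct \<open>\<lambda>\<close>\<close>

definition subspace4 :: "fn4 set \<Rightarrow> bool" where
  "subspace4 W \<longleftrightarrow>
     zero4 \<in> W \<and> (\<forall>u\<in>W. \<forall>w\<in>W. add4 u w \<in> W) \<and> (\<forall>c. \<forall>u\<in>W. smul4 c u \<in> W)"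

lemma subspace4_smul: "subspace4 W \<Longrightarrow> u \<in> W \<Longrightarrow> (\<lambda>s1 t1 s2 t2. c * u s1 t1 s2 t2) \<in> W"
  unfolding subspace4_def smul4_def by blast

lemma subspace4_add:
  "subspace4 W \<Longrightarrow> u \<in> W \<Longrightarrow> w \<in> W \<Longrightarrow> (\<lambda>s1 t1 s2 t2. u s1 t1 s2 t2 + w s1 t1 s2 t2) \<in> W"
  unfolding subspace4_def add4_def by blast

lemma subspace4_diff:
  assumes "subspace4 W" "u \<in> W" "w \<in> W"
  shows "(\<lambda>s1 t1 s2 t2. u s1 t1 s2 t2 - w s1 t1 s2 t2) \<in> W"
  using subspace4_add[OF assms(1,2) subspace4_smul[OF assms(1,3), of "-1"]] by simp

lemma subspace4_sum:
  assumes "subspace4 W" "finite A" "\<And>i. i \<in> A \<Longrightarrow> h i \<in> W"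
  shows "(\<lambda>s1 t1 s2 t2. \<Sum>i\<in>A. c i * h i s1 t1 s2 t2) \<in> W"
  using assms(2,3)
proof (induction A rule: finite_induct)
  case empty
  then show ?case
    using assms(1) by (simp add: subspace4_def zero4_def)
next
  case (insert i A)
  then show ?case
    using subspace4_add[OF assms(1) subspace4_smul[OF assms(1), of "h i" "c i"]] by simp
qed

text \<open>\<open>U\<^sub>m\<close> is a fixed linear combination of the \<open>U\<^sub>m\<^sub>+\<^sub>i + V\<^sub>m\<^sub>+\<^sub>i\<close>.\<close>
lemma exp_poly_component_mem:
  fixes a b :: complex
  assumes W: "subspace4 W" and "a \<noteq> 0" "b \<noteq> 0" "a \<noteq> b"
    and sum_mem: "\<And>m. (\<lambda>s1 t1 s2 t2. U m s1 t1 s2 t2 + V m s1 t1 s2 t2) \<in> W"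
    and U: "\<And>s1 t1 s2 t2. \<exists>p. degree p \<le> d \<and> (\<forall>m. U m s1 t1 s2 t2 = a powi m * poly p (of_int m))"
    and V: "\<And>s1 t1 s2 t2. \<exists>q. degree q \<le> d \<and> (\<forall>m. V m s1 t1 s2 t2 = b powi m * poly q (of_int m))"
  shows "U m \<in> W"
proof -
  obtain \<Psi> where \<Psi>: "\<And>p q m. degree p \<le> d \<Longrightarrow> degree q \<le> d \<Longrightarrow>
      poly_shift \<Psi> (\<lambda>m. a powi m * poly p (of_int m) + b powi m * poly q (of_int m)) m
        = a powi m * poly p (of_int m)"
    using exp_poly_separation[OF assms(2-4)] by blast
  have "U m = (\<lambda>s1 t1 s2 t2.
      \<Sum>i\<le>degree \<Psi>. coeff \<Psi> i * (U (m + int i) s1 t1 s2 t2 + V (m + int i) s1 t1 s2 t2))"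
  proof (intro ext)
    fix s1 t1 s2 t2
    obtain p q where "degree p \<le> d" "degree q \<le> d"
      and "\<forall>k. U k s1 t1 s2 t2 = a powi k * poly p (of_int k)"
      and "\<forall>k. V k s1 t1 s2 t2 = b powi k * poly q (of_int k)"
      using U[of s1 t1 s2 t2] V[of s1 t1 s2 t2] by blast
    with \<Psi>[of p q m] show "U m s1 t1 s2 t2
        = (\<Sum>i\<le>degree \<Psi>. coeff \<Psi> i * (U (m + int i) s1 t1 s2 t2 + V (m + int i) s1 t1 s2 t2))"
      by (simp add: poly_shift_def)
  qed
  also have "\<dots> \<in> W"
    using subspace4_sum[OF W, of "{..degree \<Psi>}"
        "\<lambda>i s1 t1 s2 t2. U (m + int i) s1 t1 s2 t2 + V (m + int i) s1 t1 s2 t2"] sum_mem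
    by simp
  finally show ?thesis .
qed

definition left_act :: "(gca \<Rightarrow> fn2 \<Rightarrow> fn2) \<Rightarrow> gca \<Rightarrow> fn4 \<Rightarrow> fn4" where
  "left_act \<rho> x F = (\<lambda>s1 t1 s2 t2. \<rho> x (\<lambda>s t. F s t s2 t2) s1 t1)"

definition right_act :: "(gca \<Rightarrow> fn2 \<Rightarrow> fn2) \<Rightarrow> gca \<Rightarrow> fn4 \<Rightarrow> fn4" where
  "right_act \<rho> x F = (\<lambda>s1 t1 s2 t2. \<rho> x (\<lambda>s t. F s1 t1 s t) s2 t2)"

lemma tensor_act_split:
  "tensor_act \<rho>1 \<rho>2 x F =
     (\<lambda>s1 t1 s2 t2. left_act \<rho>1 x F s1 t1 s2 t2 + right_act \<rho>2 x F s1 t1 s2 t2)"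
  by (simp add: tensor_act_def left_act_def right_act_def)

lemma omega_act_exp_poly:
  assumes "X \<in> {L, H, I, J}"
    and lines: "\<And>S T. \<exists>r. degree r \<le> N \<and> (\<forall>x. f S (T - x) = poly r x)"
  shows "\<exists>p. degree p \<le> Suc N \<and>
    (\<forall>m. omega_act lam eta sig (X m) f S T = lam powi m * poly p (of_int m))"
proof -
  obtain r where r: "degree r \<le> N" "\<forall>x. f S (T - x) = poly r x"
    using lines by blast
  obtain r' where r': "degree r' \<le> N" "\<forall>x. f (S + 1) (T - x) = poly r' x"
    using lines by blast
  have "degree [:T, S + eta:] \<le> 1"
    by simp
  then have deg_L: "degree ([:T, S + eta:] * r) \<le> Suc N"
    using degree_mult_le[of "[:T, S + eta:]" r] r(1) by linarith
  from assms(1) consider "X = L" | "X = H" | "X = I" | "X = J"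
    by blast
  then show ?thesis
  proof cases
    case 1
    show ?thesis
      by (rule exI[of _ "[:T, S + eta:] * r"]) (use deg_L r(2) in \<open>simp add: 1 algebra_simps\<close>)
  next
    case 2
    show ?thesis
      by (rule exI[of _ "smult S r"]) (use r in \<open>simp add: 2 le_SucI\<close>)
  next
    case 3
    show ?thesis
      by (rule exI[of _ 0]) (simp add: 3)
  next
    case 4
    show ?thesis
      by (rule exI[of _ "smult sig r'"]) (use r' in \<open>simp add: 4 le_SucI mult.assoc\<close>)
  qed
qed

locale tensor_submodule =
  fixes l1 l2 e1 e2 g1 g2 :: complex and W :: "fn4 set"
  assumes lambdas: "l1 \<noteq> 0" "l2 \<noteq> 0" "l1 \<noteq> l2"
    and sigmas: "g1 \<noteq> 0" "g2 \<noteq> 0"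
    and subspace: "subspace4 W"
    and polynomial: "W \<subseteq> poly4"
    and invariant: "\<And>x F. F \<in> W \<Longrightarrow> tensor_act (omega_act l1 e1 g1) (omega_act l2 e2 g2) x F \<in> W"
begin

lemma factor_acts_mem:
  assumes "F \<in> W" and "X \<in> {L, H, I, J}"
  shows "left_act (omega_act l1 e1 g1) (X m) F \<in> W"
    and "right_act (omega_act l2 e2 g2) (X m) F \<in> W"
proof -
  obtain N where "lines_degree_le N F"
    using poly4_lines_degree_bounded assms(1) polynomial by blast
  then have "\<exists>r. degree r \<le> N \<and> (\<forall>x. F S (T - x) s2 t2 = poly r x)"
    and "\<exists>r. degree r \<le> N \<and> (\<forall>x. F s1 t1 S (T - x) = poly r x)" for S T s1 t1 s2 t2
    unfolding lines_degree_le_def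
    by (metis add_0_right mult_zero_right mult_minus1_right diff_conv_add_uminus)+
  then have left: "\<exists>p. degree p \<le> Suc N \<and>
        (\<forall>m. left_act (omega_act l1 e1 g1) (X m) F s1 t1 s2 t2 = l1 powi m * poly p (of_int m))"
    and right: "\<exists>q. degree q \<le> Suc N \<and>
        (\<forall>m. right_act (omega_act l2 e2 g2) (X m) F s1 t1 s2 t2 = l2 powi m * poly q (of_int m))"
    for s1 t1 s2 t2
    unfolding left_act_def right_act_def using assms(2) by (blast intro: omega_act_exp_poly)+
  have sum_mem: "tensor_act (omega_act l1 e1 g1) (omega_act l2 e2 g2) (X m) F \<in> W" for m
    using invariant assms(1) .
  show "left_act (omega_act l1 e1 g1) (X m) F \<in> W"
    by (rule exp_poly_component_mem[OF subspace lambdas,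
          where V = "\<lambda>m. right_act (omega_act l2 e2 g2) (X m) F"])
       (use sum_mem left right in \<open>simp_all add: tensor_act_split\<close>)
  show "right_act (omega_act l2 e2 g2) (X m) F \<in> W"
    by (rule exp_poly_component_mem[OF subspace lambdas(2,1) lambdas(3)[symmetric],
          where V = "\<lambda>m. left_act (omega_act l1 e1 g1) (X m) F"])
       (use sum_mem left right in \<open>simp_all add: tensor_act_split add.commute\<close>)
qed

lemma poly4_mult_mem:
  assumes "g \<in> poly4" and "F \<in> W"
  shows "(\<lambda>s1 t1 s2 t2. g s1 t1 s2 t2 * F s1 t1 s2 t2) \<in> W"
  using assms
proof (induction arbitrary: F rule: poly4_induct)
  case (const c)
  then show ?case using subspace4_smul[OF subspace] by blast
next
  case s1
  then show ?case using factor_acts_mem(1)[of F H 0] by (simp add: left_act_def)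
next
  case t1
  then show ?case using factor_acts_mem(1)[of F L 0] by (simp add: left_act_def)
next
  case s2
  then show ?case using factor_acts_mem(2)[of F H 0] by (simp add: right_act_def)
next
  case t2
  then show ?case using factor_acts_mem(2)[of F L 0] by (simp add: right_act_def)
next
  case (add f g)
  then show ?case using subspace4_add[OF subspace] by (simp add: distrib_right)
next
  case (mult f g)
  then show ?case by (simp add: mult.assoc)
qed

lemma diff4_mem:
  assumes "F \<in> W"
  shows "diff4 1 (- of_int m) 0 0 F \<in> W" and "diff4 0 0 1 (- of_int m) F \<in> W"
proof -
  have "(\<lambda>s1 t1 s2 t2. F (s1 + 1) (t1 - of_int m) s2 t2) \<in> W"
    using subspace4_smul[OF subspace factor_acts_mem(1)[OF assms, of J m], of "1 / (l1 powi m * g1)"]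
    using lambdas(1) sigmas(1) by (simp add: left_act_def)
  moreover have "(\<lambda>s1 t1 s2 t2. F s1 t1 (s2 + 1) (t2 - of_int m)) \<in> W"
    using subspace4_smul[OF subspace factor_acts_mem(2)[OF assms, of J m], of "1 / (l2 powi m * g2)"]
    using lambdas(2) sigmas(2) by (simp add: right_act_def)
  ultimately show "diff4 1 (- of_int m) 0 0 F \<in> W" "diff4 0 0 1 (- of_int m) F \<in> W"
    using subspace4_diff[OF subspace _ assms] by (simp_all add: diff4_def)
qed

lemma nonzero_const_mem:
  assumes "W \<noteq> {zero4}"
  obtains c where "c \<noteq> 0" and "(\<lambda>s1 t1 s2 t2. c) \<in> W"
proof -
  let ?D = "[diff4 1 0 0 0, diff4 1 (-1) 0 0, diff4 0 0 1 0, diff4 0 0 1 (-1)]"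
  obtain F where F: "F \<in> W" "F \<noteq> zero4"
    using assms subspace unfolding subspace4_def by blast
  have "diff4 1 0 0 0 u \<in> W" "diff4 1 (-1) 0 0 u \<in> W" "diff4 0 0 1 0 u \<in> W" "diff4 0 0 1 (-1) u \<in> W"
    if "u \<in> W" for u
    using diff4_mem[OF that, of 0] diff4_mem[OF that, of 1] by simp_all
  then have closed: "\<And>D. D \<in> set ?D \<Longrightarrow> D ` W \<subseteq> W"
    by auto
  have nilpotent: "\<And>D. D \<in> set ?D \<Longrightarrow> \<forall>u \<in> W. \<exists>n. (D ^^ n) u = zero4"
    using diff4_nilpotent polynomial by auto
  have zero: "\<And>D. D \<in> set ?D \<Longrightarrow> D zero4 = zero4"
    using diff4_zero4 by auto
  have commute: "\<And>D D'. D \<in> set ?D \<Longrightarrow> D' \<in> set ?D \<Longrightarrow> D \<circ> D' = D' \<circ> D"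
    by (auto simp: diff4_commute)
  have "\<exists>G \<in> W. G \<noteq> zero4 \<and> (\<forall>D \<in> set ?D. D G = zero4)"
    by (rule commuting_nilpotent_common_null_vector[where x = F])
       (use closed nilpotent zero commute F in blast)+
  then obtain G where G: "G \<in> W" "G \<noteq> zero4"
    and s1: "\<forall>s1 t1 s2 t2. G (s1 + 1) t1 s2 t2 = G s1 t1 s2 t2"
    and s1_t1: "\<forall>s1 t1 s2 t2. G (s1 + 1) (t1 - 1) s2 t2 = G s1 t1 s2 t2"
    and s2: "\<forall>s1 t1 s2 t2. G s1 t1 (s2 + 1) t2 = G s1 t1 s2 t2"
    and s2_t2: "\<forall>s1 t1 s2 t2. G s1 t1 (s2 + 1) (t2 - 1) = G s1 t1 s2 t2"
    by (auto simp: diff4_eq_zero4_iff)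
  have "G s1 (t1 + 1) s2 t2 = G s1 t1 s2 t2" "G s1 t1 s2 (t2 + 1) = G s1 t1 s2 t2" for s1 t1 s2 t2
    using s1_t1[rule_format, of s1 "t1 + 1"] s1 s2_t2[rule_format, of s1 t1 s2 "t2 + 1"] s2 by simp_all
  then have G_const: "G = (\<lambda>s1 t1 s2 t2. G 0 0 0 0)"
    using G(1) polynomial s1 s2 by (intro ext poly4_periodic_const) auto
  with G(2) have "G 0 0 0 0 \<noteq> 0"
    by (auto simp: zero4_def)
  with G(1) G_const show ?thesis
    using that by auto
qed

lemma nonzero_eq_poly4:
  assumes "W \<noteq> {zero4}"
  shows "W = poly4"
proof -
  obtain c where "c \<noteq> 0" "(\<lambda>s1 t1 s2 t2. c) \<in> W"
    using nonzero_const_mem assms .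
  then have "g \<in> W" if "g \<in> poly4" for g
    using poly4_mult_mem[OF poly4_mult[OF that poly4_const[of "1 / c"]] \<open>(\<lambda>s1 t1 s2 t2. c) \<in> W\<close>]
      \<open>c \<noteq> 0\<close> by simp
  then show ?thesis
    using polynomial by blast
qed

end

theorem theorem4p6:
  fixes lam1 lam2 sig1 sig2 eta1 eta2 :: complex
  assumes "lam1 \<noteq> 0" and "lam2 \<noteq> 0" and "sig1 \<noteq> 0" and "sig2 \<noteq> 0"
  shows "irreducible_module4 poly4
           (tensor_act (omega_act lam1 eta1 sig1) (omega_act lam2 eta2 sig2))
         \<longleftrightarrow> lam1 \<noteq> lam2"
proof
  assume "irreducible_module4 poly4
    (tensor_act (omega_act lam1 eta1 sig1) (omega_act lam2 eta2 sig2))"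
  then show "lam1 \<noteq> lam2"
    using tensor_equal_lambda_reducible by blast
next
  assume "lam1 \<noteq> lam2"
  have "(\<lambda>s1 t1 s2 t2. 1) \<in> poly4" "(\<lambda>s1 t1 s2 t2. 1) \<noteq> zero4"
    by (simp_all add: poly4_const zero4_def fun_eq_iff)
  moreover have "W = {zero4} \<or> W = poly4"
    if "W \<subseteq> poly4" "zero4 \<in> W" "\<forall>u\<in>W. \<forall>w\<in>W. add4 u w \<in> W" "\<forall>c. \<forall>u\<in>W. smul4 c u \<in> W"
      "\<forall>x. \<forall>u\<in>W. tensor_act (omega_act lam1 eta1 sig1) (omega_act lam2 eta2 sig2) x u \<in> W" for W
  proof -
    interpret tensor_submodule lam1 lam2 eta1 eta2 sig1 sig2 W
      using assms \<open>lam1 \<noteq> lam2\<close> that by unfold_locales (auto simp: subspace4_def)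
    show ?thesis
      using nonzero_eq_poly4 by blast
  qed
  ultimately show "irreducible_module4 poly4
    (tensor_act (omega_act lam1 eta1 sig1) (omega_act lam2 eta2 sig2))"
    unfolding irreducible_module4_def by blast
qed

end
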